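(* Let $r\ge 1$ and let $M=(v_1,\dots,v_n)$ be a finite list (repetitions allowed) of nonzero vectors of $\mathbb{F}_2^r$ generating $\mathbb{F}_2^r$. Let $c_1(G)$ be the largest invariant factor (the exponent) of the sandpile group $K(G)$ of $G=G(\mathbb{F}_2^r,M)$. Then $$v_2(c_1(G))\le \lfloor \log_2 n\rfloor + r-1.$$
   Context: The Cayley graph $G=G(\mathbb{F}_2^r,M)$ has vertex set $\mathbb{F}_2^r$; its Laplacian $L(G)$ is the $2^r\times 2^r$ integer matrix indexed by $\mathbb{F}_2^r$ with $L(G)_{u,u}=n$ and $L(G)_{u,w}=-\#\{i: u+v_i=w\}$ for $u\neq w$. Then $\operatorname{coker}L(G)\cong \mathbb{Z}\oplus K(G)$ with $K(G)$ finite abelian (the sandpile group). For an integer $x\neq 0$, $v_2(x)$ is the largest $m$ with $2^m\mid x$. *)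

theory Defs
  imports Complex_Main "HOL-Computational_Algebra.Primes"
begin

text \<open>Vectors of F_2^r are encoded as functions nat => bool vanishing outside {..<r}.\<close>

definition vecs :: "nat \<Rightarrow> (nat \<Rightarrow> bool) set" where
  "vecs r = {v. \<forall>i\<ge>r. \<not> v i}"

definition vzero :: "nat \<Rightarrow> bool" where
  "vzero = (\<lambda>_. False)"

definition vadd :: "(nat \<Rightarrow> bool) \<Rightarrow> (nat \<Rightarrow> bool) \<Rightarrow> (nat \<Rightarrow> bool)" where
  "vadd u w = (\<lambda>i. u i \<noteq> w i)"

definition lsum :: "(nat \<Rightarrow> bool) list \<Rightarrow> nat set \<Rightarrow> (nat \<Rightarrow> bool)" where
  "lsum M S = (\<lambda>j. odd (card {i \<in> S. i < length M \<and> (M ! i) j}))"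

definition generates :: "nat \<Rightarrow> (nat \<Rightarrow> bool) list \<Rightarrow> bool" where
  "generates r M = (\<forall>w \<in> vecs r. \<exists>S \<subseteq> {..<length M}. lsum M S = w)"

definition laplacian :: "(nat \<Rightarrow> bool) list \<Rightarrow> (nat \<Rightarrow> bool) \<Rightarrow> (nat \<Rightarrow> bool) \<Rightarrow> int" where
  "laplacian M u w = (if u = w then int (length M)
     else - int (card {i. i < length M \<and> vadd u (M ! i) = w}))"

definition zvecs :: "nat \<Rightarrow> ((nat \<Rightarrow> bool) \<Rightarrow> int) set" where
  "zvecs r = {x. \<forall>u. u \<notin> vecs r \<longrightarrow> x u = 0}"

definition lap_image :: "nat \<Rightarrow> (nat \<Rightarrow> bool) list \<Rightarrow> ((nat \<Rightarrow> bool) \<Rightarrow> int) set" where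
  "lap_image r M = {x. \<exists>y \<in> zvecs r.
     x = (\<lambda>u. if u \<in> vecs r then (\<Sum>w\<in>vecs r. laplacian M u w * y w) else 0)}"

text \<open>Exponent (largest invariant factor) c_1 of the sandpile group K(G), i.e. of the
  torsion subgroup of coker L(G): the least e > 0 killing every torsion class.\<close>
definition sandpile_exponent :: "nat \<Rightarrow> (nat \<Rightarrow> bool) list \<Rightarrow> nat" where
  "sandpile_exponent r M = (LEAST e::nat. e > 0 \<and>
     (\<forall>x \<in> zvecs r. (\<exists>k::int. k \<noteq> 0 \<and> (\<lambda>u. k * x u) \<in> lap_image r M)
        \<longrightarrow> (\<lambda>u. int e * x u) \<in> lap_image r M))"

end

theory Submission
  imports Defs
begin

text \<open>The characters \<chi>_a(w) = (-1)^(a\<cdot>w) of F_2^r diagonalise the Laplacian L of the Cayley graph: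
  L \<chi>_a = 2 m(a) \<chi>_a, where m(a) is the number of generators v_i with a\<cdot>v_i = 1, and the integral
  vector (\<chi>_a - 1)/2 is mapped to m(a) \<chi>_a. Since M generates, 1 \<le> m(a) \<le> n for a \<noteq> 0. So for a
  common multiple P of 1, ..., n, orthogonality of characters shows that the combination of
  these vectors with coefficients P / m(a) over all a with a\<cdot>g = 1 is a preimage of
  2^(r-1) P (\<delta>_0 - \<delta>_g). Torsion classes have coordinate sum 0, so they are integral combinations
  of the \<delta>_0 - \<delta>_g and are killed by 2^(r-1) P; and P can be chosen with v_2(P) = \<lfloor>log_2 n\<rfloor>.\<close>

type_synonym f2vec = "nat \<Rightarrow> bool"

lemma vecs_eq_image_Pow: "vecs r = (\<lambda>S i. i \<in> S) ` Pow {..<r}"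
proof
  show "vecs r \<subseteq> (\<lambda>S i. i \<in> S) ` Pow {..<r}"
  proof
    fix v assume "v \<in> vecs r"
    then have "{i. v i} \<in> Pow {..<r}" unfolding vecs_def using not_le by auto
    then show "v \<in> (\<lambda>S i. i \<in> S) ` Pow {..<r}" by (intro image_eqI[of _ _ "{i. v i}"]) auto
  qed
qed (auto simp: vecs_def)

lemma finite_vecs: "finite (vecs r)"
  unfolding vecs_eq_image_Pow by simp

lemma card_vecs: "card (vecs r) = 2 ^ r"
proof -
  have "inj_on (\<lambda>S i. i \<in> S) (Pow {..<r})"
    by (auto simp: inj_on_def fun_eq_iff)
  then show ?thesis unfolding vecs_eq_image_Pow by (simp add: card_image card_Pow)
qed

lemma vzero_in_vecs: "vzero \<in> vecs r"
  by (simp add: vecs_def vzero_def)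

lemma vadd_in_vecs: "u \<in> vecs r \<Longrightarrow> v \<in> vecs r \<Longrightarrow> vadd u v \<in> vecs r"
  by (simp add: vecs_def vadd_def)

lemma vadd_vadd_cancel [simp]: "vadd (vadd u v) v = u"
  by (auto simp: vadd_def)

lemma vadd_eq_vzero_iff: "vadd u v = vzero \<longleftrightarrow> u = v"
  by (auto simp: vadd_def vzero_def fun_eq_iff)

lemma vadd_neq_self: "v \<noteq> vzero \<Longrightarrow> vadd u v \<noteq> u"
  by (auto simp: vadd_def vzero_def fun_eq_iff)

lemma sum_vecs_translate:
  assumes "b \<in> vecs r"
  shows "(\<Sum>a\<in>vecs r. f (vadd a b)) = (\<Sum>a\<in>vecs r. f a)"
  by (rule sum.reindex_bij_witness[where i="\<lambda>a. vadd a b" and j="\<lambda>a. vadd a b"])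
     (use assms vadd_in_vecs in auto)

definition unit_vec :: "nat \<Rightarrow> f2vec" where
  "unit_vec j = (\<lambda>i. i = j)"

lemma unit_vec_in_vecs: "j < r \<Longrightarrow> unit_vec j \<in> vecs r"
  by (simp add: vecs_def unit_vec_def)

lemma nonzero_vecsE:
  assumes "a \<in> vecs r" "a \<noteq> vzero"
  obtains j where "j < r" "a j"
proof -
  have "a = vzero" if "\<forall>j<r. \<not> a j"
    using assms(1) that by (auto simp: vecs_def vzero_def fun_eq_iff) (metis not_le)
  with assms(2) that show thesis by blast
qed

section \<open>Characters of F_2^r\<close>

definition vdot :: "nat \<Rightarrow> f2vec \<Rightarrow> f2vec \<Rightarrow> bool" where
  "vdot r a w = odd (card {i. i < r \<and> a i \<and> w i})"

lemma vdot_comm: "vdot r a w = vdot r w a"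
  unfolding vdot_def by (simp only: conj_commute conj_left_commute)

lemma card_symdiff_parity:
  assumes "finite A" "finite B"
  shows "odd (card (sym_diff A B)) \<longleftrightarrow> odd (card A) \<noteq> odd (card B)"
proof -
  have "card (sym_diff A B) = card (A - B) + card (B - A)"
    using assms by (intro card_Un_disjoint) auto
  moreover have "card A = card (A \<inter> B) + card (A - B)" "card B = card (A \<inter> B) + card (B - A)"
    using assms card_Int_Diff[of A B] card_Int_Diff[of B A] by (simp_all add: Int_commute)
  ultimately show ?thesis by auto
qed

lemma vdot_vadd_right: "vdot r a (vadd u w) \<longleftrightarrow> vdot r a u \<noteq> vdot r a w"
proof -
  have "{i. i < r \<and> a i \<and> vadd u w i}
      = sym_diff {i. i < r \<and> a i \<and> u i} {i. i < r \<and> a i \<and> w i}"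
    unfolding vadd_def by auto
  then show ?thesis unfolding vdot_def by (simp add: card_symdiff_parity)
qed

lemma vdot_vadd_left: "vdot r (vadd a b) w \<longleftrightarrow> vdot r a w \<noteq> vdot r b w"
  using vdot_vadd_right vdot_comm by metis

lemma vdot_unit_vec: "j < r \<Longrightarrow> vdot r (unit_vec j) w = w j"
proof -
  assume "j < r"
  then have "{i. i < r \<and> unit_vec j i \<and> w i} = (if w j then {j} else {})"
    by (auto simp: unit_vec_def)
  then show ?thesis by (simp add: vdot_def)
qed

lemma vdot_vzero: "\<not> vdot r vzero w"
  by (simp add: vdot_def vzero_def)

definition character :: "nat \<Rightarrow> f2vec \<Rightarrow> f2vec \<Rightarrow> int" where
  "character r a w = (if vdot r a w then -1 else 1)"

lemma character_vadd_right: "character r a (vadd u w) = character r a u * character r a w"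
  by (simp add: character_def vdot_vadd_right)

lemma character_vadd_left: "character r (vadd a b) w = character r a w * character r b w"
  by (simp add: character_def vdot_vadd_left)

lemma sum_character:
  assumes "w \<in> vecs r"
  shows "(\<Sum>a\<in>vecs r. character r a w) = (if w = vzero then 2 ^ r else 0)"
proof (cases "w = vzero")
  case True
  then show ?thesis by (simp add: character_def vdot_comm[of r _ vzero] vdot_vzero card_vecs)
next
  case False
  then obtain j where j: "j < r" "w j" using assms nonzero_vecsE by blast
  \<comment> \<open>translating by the unit vector j flips the sign of every term\<close>
  have "(\<Sum>a\<in>vecs r. character r a w) = (\<Sum>a\<in>vecs r. character r (vadd a (unit_vec j)) w)"
    by (rule sum_vecs_translate[OF unit_vec_in_vecs[OF j(1)], symmetric])
  also have "\<dots> = - (\<Sum>a\<in>vecs r. character r a w)"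
    using j by (simp add: character_vadd_left vdot_unit_vec character_def[of r "unit_vec j"]
        sum_negf)
  finally show ?thesis using False by simp
qed

lemma sum_character_odd:
  assumes "r \<ge> 1" "u \<in> vecs r" "g \<in> vecs r"
  shows "(\<Sum>a\<in>{a\<in>vecs r. vdot r a g}. character r a u)
           = 2 ^ (r - 1) * (of_bool (u = vzero) - of_bool (u = g))"
proof -
  have "2 * (\<Sum>a\<in>{a\<in>vecs r. vdot r a g}. character r a u)
      = (\<Sum>a\<in>vecs r. 2 * (if vdot r a g then character r a u else 0))"
    by (simp add: sum.inter_filter[OF finite_vecs] sum_distrib_left)
  also have "\<dots> = (\<Sum>a\<in>vecs r. character r a u - character r a (vadd u g))"
    by (intro sum.cong) (auto simp: character_def vdot_vadd_right)
  also have "\<dots> = (if u = vzero then 2 ^ r else 0) - (if u = g then 2 ^ r else 0)"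
    using sum_character[OF assms(2)] sum_character[OF vadd_in_vecs[OF assms(2,3)]]
    by (simp add: sum_subtractf vadd_eq_vzero_iff)
  also have "(2::int) ^ r = 2 * 2 ^ (r - 1)"
    using assms(1) by (cases r) simp_all
  finally show ?thesis by auto
qed

lemma lsum_insert:
  assumes "s \<notin> S" "s < length M"
  shows "lsum M (insert s S) = vadd (lsum M S) (M ! s)"
proof
  fix j
  have "{i \<in> insert s S. i < length M \<and> (M ! i) j}
      = (if (M ! s) j then insert s {i \<in> S. i < length M \<and> (M ! i) j}
         else {i \<in> S. i < length M \<and> (M ! i) j})"
    using assms by auto
  moreover have "finite {i \<in> S. i < length M \<and> (M ! i) j}" by simp
  ultimately show "lsum M (insert s S) j = vadd (lsum M S) (M ! s) j"
    using assms(1) by (simp add: lsum_def vadd_def)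
qed

lemma vdot_lsum_orthogonal:
  assumes "\<forall>i<length M. \<not> vdot r a (M ! i)" "S \<subseteq> {..<length M}"
  shows "\<not> vdot r a (lsum M S)"
proof -
  have "finite S" using assms(2) finite_subset by blast
  then show ?thesis using assms(2)
  proof (induction S rule: finite_induct)
    case empty
    then show ?case by (simp add: lsum_def vdot_def)
  next
    case (insert s S)
    then show ?case using assms(1) by (simp add: lsum_insert vdot_vadd_right)
  qed
qed

definition odd_count :: "nat \<Rightarrow> f2vec list \<Rightarrow> f2vec \<Rightarrow> nat" where
  "odd_count r M a = card {i. i < length M \<and> vdot r a (M ! i)}"

lemma odd_count_le: "odd_count r M a \<le> length M"
  unfolding odd_count_def by (rule card_mono[of "{..<length M}", simplified]) auto

lemma odd_count_pos:
  assumes "generates r M" "a \<in> vecs r" "a \<noteq> vzero"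
  shows "odd_count r M a > 0"
proof (rule ccontr)
  assume "\<not> odd_count r M a > 0"
  then have orth: "\<forall>i<length M. \<not> vdot r a (M ! i)"
    by (auto simp: odd_count_def card_eq_0_iff)
  obtain j where j: "j < r" "a j" using nonzero_vecsE assms(2,3) by blast
  then obtain S where S: "S \<subseteq> {..<length M}" "lsum M S = unit_vec j"
    using assms(1) unit_vec_in_vecs unfolding generates_def by blast
  have "vdot r a (unit_vec j)"
    using j by (simp add: vdot_comm[of r a] vdot_unit_vec)
  then show False
    using vdot_lsum_orthogonal[OF orth S(1)] S(2) by simp
qed

section \<open>The Laplacian and its image\<close>

definition lap_apply :: "f2vec list \<Rightarrow> (f2vec \<Rightarrow> int) \<Rightarrow> f2vec \<Rightarrow> int" where
  "lap_apply M y u = int (length M) * y u - (\<Sum>i<length M. y (vadd u (M ! i)))"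

lemma sum_laplacian_eq_lap_apply:
  assumes M: "\<forall>v\<in>set M. v \<in> vecs r \<and> v \<noteq> vzero" and u: "u \<in> vecs r"
  shows "(\<Sum>w\<in>vecs r. laplacian M u w * y w) = lap_apply M y u"
proof -
  let ?I = "\<lambda>w. {i \<in> {..<length M}. vadd u (M ! i) = w}"
  have "(\<Sum>w\<in>vecs r - {u}. laplacian M u w * y w) = - (\<Sum>w\<in>vecs r - {u}. \<Sum>i\<in>?I w. y w)"
    unfolding sum_negf[symmetric] by (intro sum.cong) (auto simp: laplacian_def)
  also have "(\<Sum>w\<in>vecs r - {u}. \<Sum>i\<in>?I w. y w)
      = (\<Sum>w\<in>vecs r - {u}. \<Sum>i\<in>?I w. y (vadd u (M ! i)))"
    by (intro sum.cong) auto
  also have "\<dots> = (\<Sum>i<length M. y (vadd u (M ! i)))"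
    \<comment> \<open>every neighbour vadd u (M ! i) lies in vecs r - {u} since M ! i is nonzero\<close>
    using M u by (intro sum.group) (auto simp: finite_vecs vadd_in_vecs vadd_neq_self)
  finally show ?thesis
    using sum.remove[OF finite_vecs u, of "\<lambda>w. laplacian M u w * y w"]
    by (simp add: lap_apply_def laplacian_def)
qed

lemma lap_image_eq:
  assumes M: "\<forall>v\<in>set M. v \<in> vecs r \<and> v \<noteq> vzero"
  shows "lap_image r M = range (\<lambda>y u. if u \<in> vecs r then lap_apply M y u else 0)"
proof
  show "lap_image r M \<subseteq> range (\<lambda>y u. if u \<in> vecs r then lap_apply M y u else 0)"
    using sum_laplacian_eq_lap_apply[OF M] by (auto simp: lap_image_def cong: if_cong)
next
  show "range (\<lambda>y u. if u \<in> vecs r then lap_apply M y u else 0) \<subseteq> lap_image r M"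
  proof clarify
    fix y
    define y' where "y' w = (if w \<in> vecs r then y w else (0::int))" for w
    have "lap_apply M y' u = lap_apply M y u" if "u \<in> vecs r" for u
      using M that by (simp add: lap_apply_def y'_def vadd_in_vecs)
    moreover have "y' \<in> zvecs r" by (simp add: zvecs_def y'_def)
    ultimately show "(\<lambda>u. if u \<in> vecs r then lap_apply M y u else 0) \<in> lap_image r M"
      using sum_laplacian_eq_lap_apply[OF M] unfolding lap_image_def
      by (intro CollectI bexI[of _ y']) (auto cong: if_cong)
  qed
qed

lemma zero_in_lap_image: "(\<lambda>_. 0) \<in> lap_image r M"
  unfolding lap_image_def zvecs_def by (intro CollectI bexI[of _ "\<lambda>_. 0"]) auto

lemma lap_image_add_scaled:
  assumes "a \<in> lap_image r M" "b \<in> lap_image r M"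
  shows "(\<lambda>u. s * a u + t * b u) \<in> lap_image r M"
proof -
  obtain ya where ya: "ya \<in> zvecs r"
    "a = (\<lambda>u. if u \<in> vecs r then \<Sum>w\<in>vecs r. laplacian M u w * ya w else 0)"
    using assms(1) unfolding lap_image_def by blast
  obtain yb where yb: "yb \<in> zvecs r"
    "b = (\<lambda>u. if u \<in> vecs r then \<Sum>w\<in>vecs r. laplacian M u w * yb w else 0)"
    using assms(2) unfolding lap_image_def by blast
  have "(\<lambda>w. s * ya w + t * yb w) \<in> zvecs r" using ya yb by (simp add: zvecs_def)
  then show ?thesis
    unfolding lap_image_def ya(2) yb(2)
    by (intro CollectI bexI[of _ "\<lambda>w. s * ya w + t * yb w"])
       (auto simp: fun_eq_iff algebra_simps sum.distrib sum_distrib_left)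
qed

lemma lap_image_lincomb:
  assumes "finite A" "\<forall>a\<in>A. f a \<in> lap_image r M"
  shows "(\<lambda>u. \<Sum>a\<in>A. c a * f a u) \<in> lap_image r M"
  using assms
proof (induction A rule: finite_induct)
  case empty
  then show ?case by (simp add: zero_in_lap_image)
next
  case (insert a A)
  then show ?case
    using lap_image_add_scaled[of "f a" r M "\<lambda>u. \<Sum>a\<in>A. c a * f a u" "c a" 1] by simp
qed

lemma sum_lap_apply_eq_0:
  assumes "set M \<subseteq> vecs r"
  shows "(\<Sum>u\<in>vecs r. lap_apply M y u) = 0"
proof -
  have "(\<Sum>u\<in>vecs r. lap_apply M y u)
      = int (length M) * (\<Sum>u\<in>vecs r. y u) - (\<Sum>i<length M. \<Sum>u\<in>vecs r. y (vadd u (M ! i)))"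
    by (simp add: lap_apply_def sum_subtractf sum_distrib_left sum.swap[of _ "vecs r"])
  also have "(\<Sum>i<length M. \<Sum>u\<in>vecs r. y (vadd u (M ! i))) = (\<Sum>i<length M. \<Sum>u\<in>vecs r. y u)"
    using assms by (intro sum.cong refl sum_vecs_translate) auto
  finally show ?thesis by simp
qed

lemma sum_lap_image_eq_0:
  assumes "\<forall>v\<in>set M. v \<in> vecs r \<and> v \<noteq> vzero" "x \<in> lap_image r M"
  shows "(\<Sum>u\<in>vecs r. x u) = 0"
proof -
  have "set M \<subseteq> vecs r" using assms(1) by auto
  then show ?thesis using assms sum_lap_apply_eq_0[of M r] by (auto simp: lap_image_eq)
qed

lemma lap_apply_lincomb:
  "finite A \<Longrightarrow> lap_apply M (\<lambda>w. \<Sum>a\<in>A. c a * f a w) u = (\<Sum>a\<in>A. c a * lap_apply M (f a) u)"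
  by (simp add: lap_apply_def sum_distrib_left sum_subtractf right_diff_distrib
      sum.swap[of _ "{..<length M}"] algebra_simps)

lemma sum_character_list:
  "(\<Sum>i<length M. character r a (M ! i)) = int (length M) - 2 * int (odd_count r M a)"
proof -
  have "(\<Sum>i<length M. character r a (M ! i))
      = (\<Sum>i<length M. 1 - 2 * of_bool (vdot r a (M ! i)))"
    by (intro sum.cong) (auto simp: character_def)
  also have "\<dots> = int (length M) - 2 * int (odd_count r M a)"
    by (simp add: sum_subtractf sum_distrib_left[symmetric] sum.If_cases odd_count_def
        Collect_conj_eq lessThan_def Int_commute)
  finally show ?thesis .
qed

lemma lap_apply_character:
  "lap_apply M (character r a) u = 2 * int (odd_count r M a) * character r a u"
proof -
  have "lap_apply M (character r a) u
      = character r a u * (int (length M) - (\<Sum>i<length M. character r a (M ! i)))"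
    by (simp add: lap_apply_def character_vadd_right sum_distrib_left algebra_simps)
  then show ?thesis by (simp add: sum_character_list)
qed

text \<open>The vector - of_bool (vdot r a w) is (character r a w - 1) / 2.\<close>
lemma lap_apply_neg_indicator:
  "lap_apply M (\<lambda>w. - of_bool (vdot r a w)) u = int (odd_count r M a) * character r a u"
proof -
  have "2 * lap_apply M (\<lambda>w. - of_bool (vdot r a w)) u
      = lap_apply M (\<lambda>w. 2 * - of_bool (vdot r a w)) u"
    by (simp add: lap_apply_def sum_distrib_left algebra_simps)
  also have "(\<lambda>w. 2 * - of_bool (vdot r a w)) = (\<lambda>w. character r a w - 1)"
    by (simp add: fun_eq_iff character_def)
  also have "lap_apply M (\<lambda>w. character r a w - 1) u = lap_apply M (character r a) u"
    by (simp add: lap_apply_def sum_subtractf algebra_simps)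
  finally show ?thesis by (simp add: lap_apply_character)
qed

lemma delta_diff_in_lap_image:
  assumes M: "\<forall>v\<in>set M. v \<in> vecs r \<and> v \<noteq> vzero" and "r \<ge> 1" and g: "g \<in> vecs r"
    and P: "\<forall>a\<in>vecs r. a \<noteq> vzero \<longrightarrow> odd_count r M a dvd P"
  shows "(\<lambda>u. int (2 ^ (r - 1) * P) * (of_bool (u = vzero) - of_bool (u = g))) \<in> lap_image r M"
proof -
  let ?A = "{a \<in> vecs r. vdot r a g}"
  define y where "y w = (\<Sum>a\<in>?A. int (P div odd_count r M a) * - of_bool (vdot r a w))" for w
  have "lap_apply M y u = int (2 ^ (r - 1) * P) * (of_bool (u = vzero) - of_bool (u = g))"
    if u: "u \<in> vecs r" for u
  proof -
    have "lap_apply M y u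
        = (\<Sum>a\<in>?A. int (P div odd_count r M a) * (int (odd_count r M a) * character r a u))"
      unfolding y_def by (subst lap_apply_lincomb) (simp_all add: finite_vecs lap_apply_neg_indicator)
    also have "\<dots> = int P * (\<Sum>a\<in>?A. character r a u)"
    proof (unfold sum_distrib_left, intro sum.cong refl)
      fix a assume "a \<in> ?A"
      then have "odd_count r M a dvd P" using P vdot_vzero by auto
      then have "int (P div odd_count r M a) * int (odd_count r M a) = int P"
        by (metis dvd_div_mult_self of_nat_mult)
      then show "int (P div odd_count r M a) * (int (odd_count r M a) * character r a u)
          = int P * character r a u"
        by (metis mult.assoc)
    qed
    finally show ?thesis using sum_character_odd[OF \<open>r \<ge> 1\<close> u g] by simp
  qed
  moreover have "of_bool (u = vzero) - of_bool (u = g) = (0::int)" if "u \<notin> vecs r" for u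
    using that g vzero_in_vecs by auto
  ultimately have "(\<lambda>u. int (2 ^ (r - 1) * P) * (of_bool (u = vzero) - of_bool (u = g)))
      = (\<lambda>u. if u \<in> vecs r then lap_apply M y u else 0)"
    by auto
  then show ?thesis by (simp add: lap_image_eq[OF M])
qed

lemma scaled_torsion_in_lap_image:
  assumes M: "\<forall>v\<in>set M. v \<in> vecs r \<and> v \<noteq> vzero" and r: "r \<ge> 1"
    and P: "\<forall>a\<in>vecs r. a \<noteq> vzero \<longrightarrow> odd_count r M a dvd P"
    and x: "x \<in> zvecs r" and "k \<noteq> 0" and kx: "(\<lambda>u. k * x u) \<in> lap_image r M"
  shows "(\<lambda>u. int (2 ^ (r - 1) * P) * x u) \<in> lap_image r M"
proof -
  let ?e = "int (2 ^ (r - 1) * P)"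
  have "k * (\<Sum>u\<in>vecs r. x u) = 0"
    using sum_lap_image_eq_0[OF M kx] by (simp add: sum_distrib_left)
  then have sum_x: "(\<Sum>u\<in>vecs r. x u) = 0" using \<open>k \<noteq> 0\<close> by simp
  \<comment> \<open>a vector of total weight zero is a combination of the differences of point masses\<close>
  have "(\<Sum>h\<in>vecs r. - x h * (?e * (of_bool (u = vzero) - of_bool (u = h))))
      = ?e * (\<Sum>h\<in>vecs r. x h * of_bool (u = h)) - ?e * of_bool (u = vzero) * (\<Sum>h\<in>vecs r. x h)"
    for u
  proof -
    have "(\<Sum>h\<in>vecs r. - x h * (?e * (of_bool (u = vzero) - of_bool (u = h))))
        = (\<Sum>h\<in>vecs r. ?e * (x h * of_bool (u = h)) - ?e * of_bool (u = vzero) * x h)"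
      by (intro sum.cong) (simp_all add: algebra_simps)
    then show ?thesis by (simp add: sum_subtractf sum_distrib_left)
  qed
  moreover have "(\<Sum>h\<in>vecs r. x h * of_bool (u = h)) = x u" for u
    using x by (simp add: of_bool_def finite_vecs if_distrib[of "(*) _"] sum.delta zvecs_def
        cong: if_cong)
  ultimately have "?e * x u = (\<Sum>h\<in>vecs r. - x h * (?e * (of_bool (u = vzero) - of_bool (u = h))))"
    for u using sum_x by simp
  moreover have "(\<lambda>u. \<Sum>h\<in>vecs r. - x h * (?e * (of_bool (u = vzero) - of_bool (u = h))))
      \<in> lap_image r M"
    using delta_diff_in_lap_image[OF M r _ P] by (intro lap_image_lincomb) (simp_all add: finite_vecs)
  ultimately show ?thesis by simp
qed

section \<open>The exponent of the sandpile group\<close>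

definition kills_torsion :: "nat \<Rightarrow> f2vec list \<Rightarrow> nat \<Rightarrow> bool" where
  "kills_torsion r M e = (\<forall>x \<in> zvecs r. (\<exists>k::int. k \<noteq> 0 \<and> (\<lambda>u. k * x u) \<in> lap_image r M)
     \<longrightarrow> (\<lambda>u. int e * x u) \<in> lap_image r M)"

lemma kills_torsion_gcd:
  assumes "kills_torsion r M a" "kills_torsion r M b"
  shows "kills_torsion r M (gcd a b)"
  unfolding kills_torsion_def
proof (intro ballI impI)
  fix x assume "x \<in> zvecs r" and "\<exists>k::int. k \<noteq> 0 \<and> (\<lambda>u. k * x u) \<in> lap_image r M"
  then have "(\<lambda>u. int a * x u) \<in> lap_image r M" "(\<lambda>u. int b * x u) \<in> lap_image r M"
    using assms unfolding kills_torsion_def by blast+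
  moreover obtain s t where st: "s * int a + t * int b = int (gcd a b)"
    using bezout_int[of "int a" "int b"] by (auto simp: gcd_int_int_eq)
  ultimately have "(\<lambda>u. s * (int a * x u) + t * (int b * x u)) \<in> lap_image r M"
    by (intro lap_image_add_scaled)
  moreover have "(\<lambda>u. s * (int a * x u) + t * (int b * x u)) = (\<lambda>u. int (gcd a b) * x u)"
    unfolding st[symmetric] by (simp add: fun_eq_iff algebra_simps)
  ultimately show "(\<lambda>u. int (gcd a b) * x u) \<in> lap_image r M" by simp
qed

lemma sandpile_exponent_eq_Least: "sandpile_exponent r M = (LEAST e. e > 0 \<and> kills_torsion r M e)"
  by (simp add: sandpile_exponent_def kills_torsion_def)

lemma sandpile_exponent_dvd:
  assumes "e > 0" "kills_torsion r M e"
  shows "sandpile_exponent r M dvd e"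
proof -
  define E where "E = sandpile_exponent r M"
  have E: "E > 0" "kills_torsion r M E"
    using LeastI[of "\<lambda>e. e > 0 \<and> kills_torsion r M e", OF conjI[OF assms]]
    by (simp_all add: E_def sandpile_exponent_eq_Least)
  then have "E \<le> gcd E e"
    unfolding E_def sandpile_exponent_eq_Least using assms
    by (intro Least_le) (simp add: kills_torsion_gcd)
  moreover have "gcd E e \<le> E" using E(1) by (simp add: gcd_le1_nat)
  ultimately have "gcd E e = E" by simp
  then show ?thesis unfolding E_def by (metis gcd_dvd2)
qed

lemma exists_common_multiple_2adic_floor_log:
  fixes n :: nat
  assumes "n \<ge> 1"
  shows "\<exists>P>0. (\<forall>m. 0 < m \<and> m \<le> n \<longrightarrow> m dvd P) \<and> int (multiplicity 2 P) = \<lfloor>log 2 n\<rfloor>"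
proof -
  define k where "k = nat \<lfloor>log 2 n\<rfloor>"
  have k: "\<lfloor>log 2 n\<rfloor> = int k" using assms by (simp add: k_def)
  then have bounds: "2 ^ k \<le> n" "n < 2 ^ (k + 1)"
    using floor_log_nat_eq_powr_iff[of 2 n k] assms by simp_all
  define Q where "Q = \<Prod>{j\<in>{1..n}. odd j}"
  have "odd Q" unfolding Q_def by (subst even_prod_iff) auto
  have "m dvd 2 ^ k * Q" if m: "0 < m" "m \<le> n" for m
  proof -
    obtain y where y: "m = 2 ^ multiplicity 2 m * y" "\<not> 2 dvd y"
      using multiplicity_decompose'[of m 2] m by auto
    have "y > 0" using y(1) m(1) by (cases "y = 0") auto
    have "y \<le> m" using y(1) m(1) by (metis dvd_imp_le dvd_triv_right)
    have "2 ^ multiplicity 2 m \<le> m" using y(1) m(1) by (metis dvd_imp_le dvd_triv_left)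
    then have "(2::nat) ^ multiplicity 2 m < 2 ^ (k + 1)" using m(2) bounds(2) by linarith
    then have "multiplicity 2 m \<le> k"
      using power_less_imp_less_exp[of "2::nat" "multiplicity 2 m" "k + 1"] by simp
    then have "2 ^ multiplicity 2 m dvd (2::nat) ^ k" by (rule le_imp_power_dvd)
    moreover have "y dvd Q"
      unfolding Q_def using y(2) \<open>y > 0\<close> \<open>y \<le> m\<close> m by (intro dvd_prodI) auto
    ultimately show ?thesis by (subst y(1)) (rule mult_dvd_mono)
  qed
  moreover have "multiplicity 2 (2 ^ k * Q) = k"
    using \<open>odd Q\<close> by (intro multiplicity_decomposeI[of _ 2 k Q]) simp_all
  moreover have "2 ^ k * Q > 0" using \<open>odd Q\<close> by (simp add: odd_pos)
  ultimately show ?thesis using k by (intro exI[of _ "2 ^ k * Q"]) simp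
qed

theorem mainTheorem2:
  fixes r :: nat and M :: "(nat \<Rightarrow> bool) list"
  assumes "r \<ge> 1"
    and "\<forall>v \<in> set M. v \<in> vecs r \<and> v \<noteq> vzero"
    and "generates r M"
  shows "int (multiplicity (2::nat) (sandpile_exponent r M))
           \<le> \<lfloor>log 2 (real (length M))\<rfloor> + int r - 1"
proof -
  have "unit_vec 0 \<noteq> vzero" by (metis unit_vec_def vzero_def)
  then have "odd_count r M (unit_vec 0) > 0"
    using odd_count_pos[OF assms(3) unit_vec_in_vecs] assms(1) by simp
  then have "length M \<ge> 1" using odd_count_le[of r M "unit_vec 0"] by linarith
  then obtain P where P: "P > 0" "\<forall>m. 0 < m \<and> m \<le> length M \<longrightarrow> m dvd P"
    "int (multiplicity 2 P) = \<lfloor>log 2 (length M)\<rfloor>"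
    using exists_common_multiple_2adic_floor_log by blast
  have "\<forall>a\<in>vecs r. a \<noteq> vzero \<longrightarrow> odd_count r M a dvd P"
    using P(2) odd_count_pos[OF assms(3)] odd_count_le by blast
  then have "kills_torsion r M (2 ^ (r - 1) * P)"
    using scaled_torsion_in_lap_image[OF assms(2,1)] unfolding kills_torsion_def by blast
  then have "sandpile_exponent r M dvd 2 ^ (r - 1) * P"
    using P(1) by (intro sandpile_exponent_dvd) simp_all
  then have "multiplicity 2 (sandpile_exponent r M) \<le> multiplicity (2::nat) (2 ^ (r - 1) * P)"
    using P(1) by (intro dvd_imp_multiplicity_le) simp_all
  also have "\<dots> = r - 1 + multiplicity 2 P"
    using P(1) prime_imp_prime_elem[OF two_is_prime_nat]
    by (simp add: prime_elem_multiplicity_mult_distrib multiplicity_same_power)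
  finally show ?thesis using P(3) assms(1) by linarith
qed

end
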